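(* For $n\ge1$ let $R_n(t)=\sum_{T'\in\mathcal{T}'_n}t^{\operatorname{cdes}(T')-1}$. Then $$\sum_{n\ge1}R_n(t)\frac{z^n}{n!}=z\,\overline{Q}(t,z),$$ where $\overline{Q}(t,z)=\sum_{n\ge0}\overline{Q}_n(t)\frac{z^n}{n!}$ and $\overline{Q}_n(t)=\sum_{\pi}t^{\operatorname{des}(\pi)}$ over all quasi-Stirling permutations $\pi$ of size $n$.
   Context: $\mathcal{T}_n$ is the set of plane (ordered) rooted trees with $n$ edges labeled bijectively by $\{1,\dots,n\}$, and $\mathcal{T}'_n\subseteq\mathcal{T}_n$ is the subset of trees whose root has exactly one child. For a sequence $\pi_1\cdots\pi_r$: $i\in\{1,\dots,r\}$ is a descent if $\pi_i>\pi_{i+1}$ or $i=r$, and $\operatorname{des}$ counts descents; $\operatorname{cdes}(\pi_1\cdots\pi_r)=|\{i\in\{1,\dots,r\}:\pi_i>\pi_{i+1}\}|$ with $\pi_{r+1}=\pi_1$. For a vertex $v$ of a tree $T\in\mathcal{T}_n$ whose children edges have labels $a_1,\dots,a_d$ from left to right: if $v$ is not the root and its parent edge has label $\ell$, $\operatorname{cdes}(v)=\operatorname{cdes}(\ell a_1\cdots a_d)$; if $v$ is the root, $\operatorname{cdes}(v)=\operatorname{des}(a_1\cdots a_d)$; and $\operatorname{cdes}(T)=\sum_v\operatorname{cdes}(v)$. A quasi-Stirling permutation of size $n$ is a permutation $\pi_1\cdots\pi_{2n}$ of $\{1,1,\dots,n,n\}$ with no indices $i<j<k<\ell$ with $\pi_i=\pi_k$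 and $\pi_j=\pi_\ell$ (for $n=0$ only the empty sequence). *)

theory Defs
  imports "HOL-Computational_Algebra.Computational_Algebra"
begin

text \<open>Plane rooted trees with labelled edges: a node is the list (left to right)
of its child edges, each given as (edge label, subtree below that edge).\<close>
datatype ltree = Node "(nat \<times> ltree) list"

fun edge_labels :: "ltree \<Rightarrow> nat list" where
  "edge_labels (Node cs) = concat (map (\<lambda>(a, s). a # edge_labels s) cs)"

definition trees :: "nat \<Rightarrow> ltree set" where
  "trees n = {T. mset (edge_labels T) = mset [1..<n+1]}"

definition trees1 :: "nat \<Rightarrow> ltree set" where
  "trees1 n = {T \<in> trees n. \<exists>a s. T = Node [(a, s)]}"

definition des :: "nat list \<Rightarrow> nat" where
  "des xs = card {i. i < length xs \<and> (i = length xs - 1 \<or> xs ! i > xs ! (i+1))}"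

definition cdes_list :: "nat list \<Rightarrow> nat" where
  "cdes_list xs = card {i. i < length xs \<and> xs ! i > xs ! ((i+1) mod length xs)}"

text \<open>cdes summed over a non-root vertex with parent edge label l and all vertices below.\<close>
fun cdes_below :: "nat \<Rightarrow> ltree \<Rightarrow> nat" where
  "cdes_below l (Node cs) =
     cdes_list (l # map fst cs) + sum_list (map (\<lambda>(a, s). cdes_below a s) cs)"

fun cdes_tree :: "ltree \<Rightarrow> nat" where
  "cdes_tree (Node cs) = des (map fst cs) + sum_list (map (\<lambda>(a, s). cdes_below a s) cs)"

definition quasi_stirling :: "nat \<Rightarrow> nat list set" where
  "quasi_stirling n = {p. mset p = mset ([1..<n+1] @ [1..<n+1]) \<and>
     \<not> (\<exists>i j k l. i < j \<and> j < k \<and> k < l \<and> l < length p \<and> p ! i = p ! k \<and> p ! j = p ! l)}"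

definition R :: "nat \<Rightarrow> real poly" where
  "R n = (\<Sum>T\<in>trees1 n. monom 1 (cdes_tree T - 1))"

definition Qbar :: "nat \<Rightarrow> real poly" where
  "Qbar n = (\<Sum>p\<in>quasi_stirling n. monom 1 (des p))"

end

theory Submission
  imports Defs "HOL-Library.Sublist"
begin

(* Reading the labels of a tree in T_m along its contour, each edge label once on the way down
   and once on the way back up, gives a bijection from T_m onto the quasi-Stirling permutations
   of size m, and the descents of the contour word are exactly the cyclic descents of the tree
   (the root acts as a vertex whose parent edge carries the label 0).  Hence Qbar_m counts
   T_m by cdes.

   A tree in T'_n is a root edge a above a tree S carrying the remaining labels, and its cdes
   exceeds cdes_below a S by one.  The cyclic relabelling x |-> x + 1, n |-> 1 preserves cyclic
   descents, so all n choices of a contribute the same polynomial; for the maximal label a = n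
   the root edge does not affect any descent, so that polynomial is Qbar_(n-1).  Thus
   R_n = n Qbar_(n-1), which is the claimed identity coefficientwise. *)

section \<open>Descents of lists\<close>

fun adj_des :: "nat list \<Rightarrow> nat" where
  "adj_des (x # y # zs) = of_bool (y < x) + adj_des (y # zs)"
| "adj_des _ = 0"

lemma adj_des_Cons: "adj_des (x # xs) = adj_des xs + of_bool (xs \<noteq> [] \<and> hd xs < x)"
  by (cases xs) auto

lemma adj_des_append_Cons: "adj_des (xs @ y # ys) = adj_des (xs @ [y]) + adj_des (y # ys)"
  by (induction xs rule: adj_des.induct) (auto simp: adj_des_Cons)

lemma adj_des_eq_card: "adj_des xs = card {i. Suc i < length xs \<and> xs ! Suc i < xs ! i}"
proof (induction xs rule: adj_des.induct)
  case (1 x y zs)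
  have "{i. Suc i < length (x # y # zs) \<and> (x # y # zs) ! Suc i < (x # y # zs) ! i}
      = {i. i = 0 \<and> y < x} \<union> Suc ` {i. Suc i < length (y # zs) \<and> (y # zs) ! Suc i < (y # zs) ! i}"
    (is "?A = ?B \<union> Suc ` ?C")
  proof (rule set_eqI)
    fix i show "i \<in> ?A \<longleftrightarrow> i \<in> ?B \<union> Suc ` ?C" by (cases i) auto
  qed
  moreover have "finite {i. Suc i < length (y # zs) \<and> (y # zs) ! Suc i < (y # zs) ! i}"
    by (rule finite_subset[of _ "{..<length (y # zs)}"]) auto
  ultimately show ?case using 1 by (simp add: card_image card_Un_disjoint)
qed auto

lemma adj_des_snoc: "adj_des (xs @ [y]) = adj_des xs + of_bool (xs \<noteq> [] \<and> y < last xs)"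
  by (induction xs rule: adj_des.induct) auto

lemma des_eq_adj_des: "des xs = adj_des xs + of_bool (xs \<noteq> [])"
proof (cases "xs = []")
  case False
  then have "{i. i < length xs \<and> (i = length xs - 1 \<or> xs ! i > xs ! (i + 1))}
      = insert (length xs - 1) {i. Suc i < length xs \<and> xs ! Suc i < xs ! i}"
    by auto
  moreover have "finite {i. Suc i < length xs \<and> xs ! Suc i < xs ! i}"
    by (rule finite_subset[of _ "{..<length xs}"]) auto
  ultimately show ?thesis using False by (simp add: des_def adj_des_eq_card)
qed (simp add: des_def)

lemma cdes_list_eq_adj_des: "cdes_list (x # xs) = adj_des (x # xs @ [x])"
proof -
  let ?c = "x # xs" and ?w = "x # xs @ [x]"
  have "{i. i < length ?c \<and> ?c ! i > ?c ! ((i + 1) mod length ?c)}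
      = {i. Suc i < length ?w \<and> ?w ! Suc i < ?w ! i}"
  proof (rule Collect_cong)
    fix i
    consider "i < length xs" | "i = length xs" | "i > length xs" by linarith
    then show "(i < length ?c \<and> ?c ! i > ?c ! ((i + 1) mod length ?c))
        \<longleftrightarrow> (Suc i < length ?w \<and> ?w ! Suc i < ?w ! i)"
      by cases (auto simp: nth_Cons' nth_append)
  qed
  then show ?thesis by (simp add: cdes_list_def adj_des_eq_card)
qed

lemma cdes_list_Cons_extremal:
  assumes "(\<forall>y\<in>set ys. y < x) \<or> (\<forall>y\<in>set ys. x < y)"
  shows "cdes_list (x # ys) = des ys"
proof (cases "ys = []")
  case True
  then show ?thesis by (simp add: cdes_list_eq_adj_des des_def)
next
  case False
  have "hd ys \<in> set ys" "last ys \<in> set ys" using False by simp_all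
  then have "of_bool (hd ys < x) + of_bool (x < last ys) = (1 :: nat)"
    using assms by (metis less_asym of_bool_eq(1,2) add_0 add_0_right)
  then show ?thesis
    using False by (simp add: cdes_list_eq_adj_des adj_des_snoc adj_des_Cons des_eq_adj_des)
qed

definition cyc_succ :: "nat \<Rightarrow> nat \<Rightarrow> nat" where
  "cyc_succ n x = (if x = n then 1 else Suc x)"

(* The relabelling turns each descent (n, y) into an ascent and each ascent (y, n) into a
   descent; along a list such steps alternate, so they cancel except at the two ends. *)
lemma adj_des_map_cyc_succ:
  "set xs \<subseteq> {1..n} \<Longrightarrow> xs \<noteq> [] \<Longrightarrow>
    adj_des (map (cyc_succ n) xs) + of_bool (hd xs = n) = adj_des xs + of_bool (last xs = n)"
  by (induction xs rule: adj_des.induct) (auto simp: cyc_succ_def)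

lemma cdes_list_map_cyc_succ:
  assumes "set xs \<subseteq> {1..n}"
  shows "cdes_list (map (cyc_succ n) xs) = cdes_list xs"
proof (cases xs)
  case (Cons x ys)
  then show ?thesis
    using assms adj_des_map_cyc_succ[of "x # ys @ [x]" n] by (simp add: cdes_list_eq_adj_des)
qed (simp add: cdes_list_def)

section \<open>Contour words of trees\<close>

fun children :: "ltree \<Rightarrow> (nat \<times> ltree) list" where
  "children (Node cs) = cs"

fun word :: "ltree \<Rightarrow> nat list" where
  "word (Node cs) = concat (map (\<lambda>(a, s). a # word s @ [a]) cs)"

fun relabel :: "(nat \<Rightarrow> nat) \<Rightarrow> ltree \<Rightarrow> ltree" where
  "relabel f (Node cs) = Node (map (\<lambda>(a, s). (f a, relabel f s)) cs)"

lemma word_Node_Nil [simp]: "word (Node []) = []"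
  and word_Node_Cons [simp]: "word (Node ((a, s) # cs)) = a # word s @ a # word (Node cs)"
  and edge_labels_Node_Nil [simp]: "edge_labels (Node []) = []"
  and edge_labels_Node_Cons [simp]:
    "edge_labels (Node ((a, s) # cs)) = a # edge_labels s @ edge_labels (Node cs)"
  by simp_all

declare word.simps [simp del] edge_labels.simps [simp del]

lemma ltree_forest_induct [case_names Nil Cons]:
  assumes "P (Node [])" and "\<And>a s cs. P s \<Longrightarrow> P (Node cs) \<Longrightarrow> P (Node ((a, s) # cs))"
  shows "P T"
proof (induction T)
  case (Node cs)
  then show ?case
  proof (induction cs)
    case (Cons c cs)
    obtain a s where c: "c = (a, s)" by force
    have "P s" using Cons.prems[of c s] c by simp
    moreover have "P (Node cs)" using Cons by auto
    ultimately show ?case using assms(2) c by simp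
  qed (rule assms(1))
qed

lemma mset_word: "mset (word T) = mset (edge_labels T) + mset (edge_labels T)"
  by (induction T rule: ltree_forest_induct) auto

lemma set_word: "set (word T) = set (edge_labels T)"
  by (induction T rule: ltree_forest_induct) auto

lemma word_relabel: "word (relabel f T) = map f (word T)"
  by (induction T rule: ltree_forest_induct) auto

lemma edge_labels_relabel: "edge_labels (relabel f T) = map f (edge_labels T)"
  by (induction T rule: ltree_forest_induct) auto

lemma relabel_inverse: "\<forall>x\<in>set (edge_labels T). g (f x) = x \<Longrightarrow> relabel g (relabel f T) = T"
  by (induction T rule: ltree_forest_induct) auto

lemma fst_children_subset: "set (map fst (children T)) \<subseteq> set (edge_labels T)"
proof (cases T)
  case (Node cs)
  then show ?thesis by (induction cs arbitrary: T) auto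
qed

lemma cdes_below_eq_adj_des:
  "cdes_below x T = adj_des (x # map fst (children T) @ [x]) + (\<Sum>(a, s)\<leftarrow>children T. cdes_below a s)"
  by (cases T) (simp add: cdes_list_eq_adj_des)

lemma adj_des_word:
  "adj_des (x # word T @ [y])
    = adj_des (x # map fst (children T) @ [y]) + (\<Sum>(a, s)\<leftarrow>children T. cdes_below a s)"
proof (induction T arbitrary: x y rule: ltree_forest_induct)
  case (Cons a s cs)
  have "adj_des (x # word (Node ((a, s) # cs)) @ [y])
      = of_bool (a < x) + adj_des (a # word s @ [a]) + adj_des (a # word (Node cs) @ [y])"
    using adj_des_append_Cons[of "x # a # word s" a "word (Node cs) @ [y]"] by simp
  also have "\<dots> = of_bool (a < x) + cdes_below a s + adj_des (a # map fst cs @ [y])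
      + (\<Sum>(b, t)\<leftarrow>cs. cdes_below b t)"
    using Cons.IH cdes_below_eq_adj_des[of a s] by simp
  finally show ?case by simp
qed simp

lemma cdes_below_eq_cdes_list_word: "cdes_below x T = cdes_list (x # word T)"
  using cdes_below_eq_adj_des[of x T] by (simp add: cdes_list_eq_adj_des adj_des_word)

lemma cdes_below_extremal:
  assumes "(\<forall>y\<in>set (edge_labels T). y < x) \<or> (\<forall>y\<in>set (edge_labels T). x < y)"
  shows "cdes_below x T = cdes_tree T"
proof (cases T)
  case (Node cs)
  then have "(\<forall>y\<in>set (map fst cs). y < x) \<or> (\<forall>y\<in>set (map fst cs). x < y)"
    using assms fst_children_subset[of T] by auto
  then show ?thesis using Node by (simp add: cdes_list_Cons_extremal)
qed

(* The root behaves like a vertex whose parent edge carries the label 0, below all labels. *)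
lemma des_word:
  assumes "0 \<notin> set (edge_labels T)"
  shows "des (word T) = cdes_tree T"
proof -
  have pos: "\<forall>y\<in>set (edge_labels T). 0 < y" using assms by (auto intro: gr0I)
  have "des (word T) = cdes_list (0 # word T)"
    using pos by (simp add: cdes_list_Cons_extremal set_word)
  also have "\<dots> = cdes_below 0 T" by (simp add: cdes_below_eq_cdes_list_word)
  also have "\<dots> = cdes_tree T" using pos by (simp add: cdes_below_extremal)
  finally show ?thesis .
qed

lemma cdes_below_relabel_cyc_succ:
  assumes "set (x # edge_labels T) \<subseteq> {1..n}"
  shows "cdes_below (cyc_succ n x) (relabel (cyc_succ n) T) = cdes_below x T"
  using assms cdes_list_map_cyc_succ[of "x # word T" n]
  by (simp add: cdes_below_eq_cdes_list_word word_relabel set_word)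

section \<open>Quasi-Stirling permutations as contour words\<close>

lemma set_subseq_subset: "subseq xs ys \<Longrightarrow> set xs \<subseteq> set ys"
  by (induction rule: list_emb.induct) auto

lemma subseq_singleton_right_iff: "subseq xs [a] \<longleftrightarrow> xs = [] \<or> xs = [a]"
  by (cases xs) (auto simp: subseq_singleton_left)

lemma subseq_Cons_iff_nth:
  "subseq (x # xs) ys \<longleftrightarrow> (\<exists>i<length ys. ys ! i = x \<and> subseq xs (drop (Suc i) ys))"
  by (induction ys) (auto simp: Ex_less_Suc2 dest: subseq_Cons')

(* Stated for a suffix drop m ys, so that unfolding it walks along a whole pattern. *)
lemma subseq_Cons_drop_iff_nth:
  "subseq (x # xs) (drop m ys)
    \<longleftrightarrow> (\<exists>i\<ge>m. i < length ys \<and> ys ! i = x \<and> subseq xs (drop (Suc i) ys))"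
proof
  assume "subseq (x # xs) (drop m ys)"
  then obtain i where "i < length ys - m" "drop m ys ! i = x" "subseq xs (drop (Suc i) (drop m ys))"
    by (auto simp: subseq_Cons_iff_nth)
  then show "\<exists>i\<ge>m. i < length ys \<and> ys ! i = x \<and> subseq xs (drop (Suc i) ys)"
    by (intro exI[of _ "m + i"]) (auto simp: add.commute)
next
  assume "\<exists>i\<ge>m. i < length ys \<and> ys ! i = x \<and> subseq xs (drop (Suc i) ys)"
  then obtain i where "m \<le> i" "i < length ys" "ys ! i = x" "subseq xs (drop (Suc i) ys)"
    by blast
  then show "subseq (x # xs) (drop m ys)"
    unfolding subseq_Cons_iff_nth by (intro exI[of _ "i - m"]) (auto simp: Suc_diff_le)
qed

lemma subseq_abab_iff_nth:
  "subseq [x, y, x, y] p \<longleftrightarrow> (\<exists>i j k l. i < j \<and> j < k \<and> k < l \<and> l < length p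
      \<and> p ! i = x \<and> p ! j = y \<and> p ! k = x \<and> p ! l = y)"
proof -
  have "subseq [x, y, x, y] (drop 0 p) \<longleftrightarrow> (\<exists>i j k l. i < j \<and> j < k \<and> k < l \<and> l < length p
      \<and> p ! i = x \<and> p ! j = y \<and> p ! k = x \<and> p ! l = y)" (is "?L \<longleftrightarrow> ?R")
  proof
    assume ?L then show ?R
      unfolding subseq_Cons_drop_iff_nth by (auto simp: Suc_le_eq)
  next
    assume ?R
    then obtain i j k l where "i < j" "j < k" "k < l" "l < length p"
      "p ! i = x" "p ! j = y" "p ! k = x" "p ! l = y" by blast
    then show ?L
      unfolding subseq_Cons_drop_iff_nth
      by (intro exI[of _ i] exI[of _ j] exI[of _ k] exI[of _ l] conjI) auto
  qed
  then show ?thesis by simp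
qed

definition abab_free :: "'a list \<Rightarrow> bool" where
  "abab_free p \<longleftrightarrow> (\<forall>x y. \<not> subseq [x, y, x, y] p)"

lemma abab_free_iff_nth:
  "abab_free p \<longleftrightarrow>
    \<not> (\<exists>i j k l. i < j \<and> j < k \<and> k < l \<and> l < length p \<and> p ! i = p ! k \<and> p ! j = p ! l)"
proof
  assume "abab_free p"
  show "\<not> (\<exists>i j k l. i < j \<and> j < k \<and> k < l \<and> l < length p \<and> p ! i = p ! k \<and> p ! j = p ! l)"
  proof clarify
    fix i j k l
    assume "i < j" "j < k" "k < l" "l < length p" "p ! i = p ! k" "p ! j = p ! l"
    then have "subseq [p ! i, p ! j, p ! i, p ! j] p" unfolding subseq_abab_iff_nth by metis
    then show False using \<open>abab_free p\<close> unfolding abab_free_def by blast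
  qed
next
  assume "\<not> (\<exists>i j k l. i < j \<and> j < k \<and> k < l \<and> l < length p \<and> p ! i = p ! k \<and> p ! j = p ! l)"
  then show "abab_free p" unfolding abab_free_def subseq_abab_iff_nth by metis
qed

lemma abab_free_subseq: "abab_free p \<Longrightarrow> subseq q p \<Longrightarrow> abab_free q"
  unfolding abab_free_def using subseq_order.order_trans by blast

lemma abab_free_append:
  assumes "abab_free u" "abab_free v" "set u \<inter> set v = {}"
  shows "abab_free (u @ v)"
  unfolding abab_free_def
proof (intro allI notI)
  fix x y
  assume "subseq [x, y, x, y] (u @ v)"
  then obtain w1 w2 where w: "[x, y, x, y] = w1 @ w2" "subseq w1 u" "subseq w2 v"
    by (rule subseq_appendE)
  have "set w1 \<inter> set w2 = {}"
    using w(2,3) assms(3) set_subseq_subset by blast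
  then have "w1 = [] \<or> w2 = []"
    using w(1) by (auto simp: Cons_eq_append_conv)
  then show False
    using w assms(1,2) unfolding abab_free_def by auto
qed

lemma abab_free_enclose:
  assumes "abab_free u" "a \<notin> set u"
  shows "abab_free (a # u @ [a])"
  unfolding abab_free_def
proof (intro allI notI)
  fix x y
  have "\<not> subseq z (u @ [a])" if z_cases: "z = [y, a, y] \<or> z = [x, y, x, y]" for z
  proof
    assume "subseq z (u @ [a])"
    then obtain w w' where z: "z = w @ w'" and w: "subseq w u" and "subseq w' [a]"
      by (rule subseq_appendE)
    then have "w' = [] \<or> w' = [a]" by (simp add: subseq_singleton_right_iff)
    moreover have "a \<notin> set w" using w assms(2) set_subseq_subset by blast
    ultimately have "w = [x, y, x, y]" using z_cases z by (auto simp: append_eq_Cons_conv)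
    then show False using w assms(1) unfolding abab_free_def by blast
  qed
  moreover assume "subseq [x, y, x, y] (a # u @ [a])"
  ultimately show False by (cases "x = a") auto
qed

lemma abab_free_Cons_append:
  assumes "abab_free u" "abab_free v" "a \<notin> set u" "a \<notin> set v" "set u \<inter> set v = {}"
  shows "abab_free (a # u @ a # v)"
  using abab_free_append[OF abab_free_enclose[OF assms(1,3)] assms(2)] assms(4,5) by simp

lemma abab_free_Cons_append_disjoint:
  assumes "abab_free (a # u @ a # v)"
  shows "set u \<inter> set v = {}"
proof (rule ccontr)
  assume "set u \<inter> set v \<noteq> {}"
  then obtain x where "subseq [x] u" "subseq [x] v" by (auto simp: subseq_singleton_left)
  then have "subseq ([a] @ [x] @ [a] @ [x]) ([a] @ u @ [a] @ v)"
    by (intro list_emb_append_mono) auto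
  then have "subseq [a, x, a, x] (a # u @ a # v)" by simp
  then show False using assms unfolding abab_free_def by blast
qed

lemma Node_children [simp]: "Node (children T) = T"
  by (cases T) simp

lemma word_eq_Nil_iff: "word T = [] \<longleftrightarrow> T = Node []"
proof (cases T)
  case (Node cs)
  then show ?thesis by (cases cs) auto
qed

lemma abab_free_word: "distinct (edge_labels T) \<Longrightarrow> abab_free (word T)"
proof (induction T rule: ltree_forest_induct)
  case Nil
  then show ?case by (simp add: abab_free_def)
next
  case (Cons a s cs)
  then show ?case
    unfolding word_Node_Cons by (intro abab_free_Cons_append) (auto simp: set_word)
qed

lemma word_inject:
  assumes "distinct (edge_labels T)" "distinct (edge_labels T')" "word T = word T'"
  shows "T = T'"
  using assms
proof (induction T arbitrary: T' rule: ltree_forest_induct)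
  case Nil
  then show ?case by (metis word_eq_Nil_iff)
next
  case (Cons a s cs)
  obtain cs' where "T' = Node cs'" by (cases T')
  moreover have "cs' \<noteq> []" using Cons.prems(3) calculation by (auto simp: word_eq_Nil_iff)
  ultimately obtain b t ds where T': "T' = Node ((b, t) # ds)" by (metis list.exhaust prod.exhaust)
  have w: "a # word s @ a # word (Node cs) = b # word t @ b # word (Node ds)"
    using Cons.prems(3) unfolding T' by (simp only: word_Node_Cons)
  then have "a = b" by simp
  have "a \<notin> set (word s)" "a \<notin> set (word (Node cs))"
    using Cons.prems(1) by (auto simp: set_word)
  with w \<open>a = b\<close> have "word s = word t" "word (Node cs) = word (Node ds)"
    using append_Cons_eq_iff[of a "word s" "word (Node cs)"] by auto
  then have "s = t" "Node cs = Node ds"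
    using Cons.IH Cons.prems(1,2) T' by auto
  then show ?case using T' \<open>a = b\<close> by simp
qed

lemma Cons_count_2_split:
  assumes "count (mset (a # xs)) a = 2"
  obtains u v where "xs = u @ a # v" "a \<notin> set u" "a \<notin> set v"
proof -
  have "count (mset xs) a = 1" using assms by simp
  then have "a \<in> set xs" by (metis count_mset_0_iff one_neq_zero)
  then obtain u v where xs: "xs = u @ a # v" and "a \<notin> set u" by (meson split_list_first)
  moreover have "a \<notin> set v" using assms xs \<open>a \<notin> set u\<close> by (auto simp flip: count_mset_0_iff)
  ultimately show ?thesis using that by blast
qed

lemma count_2_Cons_append:
  assumes "\<forall>x\<in>set (a # u @ a # v). count (mset (a # u @ a # v)) x = 2"
    and "a \<notin> set u" "a \<notin> set v" "set u \<inter> set v = {}"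
  shows "\<forall>x\<in>set u. count (mset u) x = 2" "\<forall>x\<in>set v. count (mset v) x = 2"
proof -
  have "count (mset u) x = 2" if "x \<in> set u" for x
  proof -
    have "x \<noteq> a" "count (mset v) x = 0" using that assms(2,4) by auto
    moreover have "count (mset (a # u @ a # v)) x = 2" using that assms(1) by simp
    ultimately show ?thesis by (simp del: count_mset_0_iff)
  qed
  moreover have "count (mset v) x = 2" if "x \<in> set v" for x
  proof -
    have "x \<noteq> a" "count (mset u) x = 0" using that assms(3,4) by auto
    moreover have "count (mset (a # u @ a # v)) x = 2" using that assms(1) by simp
    ultimately show ?thesis by (simp del: count_mset_0_iff)
  qed
  ultimately show "\<forall>x\<in>set u. count (mset u) x = 2" "\<forall>x\<in>set v. count (mset v) x = 2"
    by blast+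
qed

lemma word_surj:
  assumes "\<forall>x\<in>set p. count (mset p) x = 2" "abab_free p"
  shows "\<exists>T. word T = p"
  using assms
proof (induction "length p" arbitrary: p rule: less_induct)
  case less
  show ?case
  proof (cases p)
    case Nil
    then show ?thesis using word_Node_Nil by blast
  next
    case (Cons a xs)
    then have "count (mset (a # xs)) a = 2" using less.prems(1) by simp
    then obtain u v where "xs = u @ a # v" and a: "a \<notin> set u" "a \<notin> set v"
      by (rule Cons_count_2_split)
    with Cons have p: "p = a # u @ a # v" by simp
    have "set u \<inter> set v = {}"
      using abab_free_Cons_append_disjoint[of a u v] less.prems(2) p by simp
    note counts = count_2_Cons_append[OF less.prems(1)[unfolded p] a this]
    have "subseq u p" "subseq v p"
      unfolding p using subseq_drop_many[of v v "a # u @ [a]"]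
      by (auto intro: list_emb_Cons subseq_rev_drop_many)
    then have "abab_free u" "abab_free v" using less.prems(2) abab_free_subseq by blast+
    moreover have "length u < length p" "length v < length p" using p by simp_all
    ultimately obtain U V where "word U = u" "word V = v" using less.hyps counts by meson
    then have "word (Node ((a, U) # children V)) = p" using p by simp
    then show ?thesis by blast
  qed
qed

lemma mset_eq_upt_iff: "mset xs = mset [1..<m+1] \<longleftrightarrow> distinct xs \<and> set xs = {1..m}"
  by (metis atLeastLessThanSuc_atLeastAtMost distinct_upt mset_eq_imp_distinct_iff
      set_eq_iff_mset_eq_distinct set_upt Suc_eq_plus1)

lemma mem_trees_iff: "T \<in> trees m \<longleftrightarrow> distinct (edge_labels T) \<and> set (edge_labels T) = {1..m}"
  unfolding trees_def mem_Collect_eq by (rule mset_eq_upt_iff)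

lemma mset_double_cancel: "M + M = N + N \<Longrightarrow> M = (N :: 'a multiset)"
  by (metis count_union add_diff_cancel_left' mult_2 multiset_eq_iff nat_mult_eq_cancel_disj
      zero_neq_numeral)

lemma bij_betw_word: "bij_betw word (trees m) (quasi_stirling m)"
proof -
  let ?L = "[1..<m+1]"
  have qs: "p \<in> quasi_stirling m \<longleftrightarrow> mset p = mset ?L + mset ?L \<and> abab_free p" for p
    by (simp add: quasi_stirling_def abab_free_iff_nth)
  have "inj_on word (trees m)"
    by (auto intro!: inj_onI word_inject simp: mem_trees_iff)
  moreover have "word T \<in> quasi_stirling m" if T: "T \<in> trees m" for T
  proof -
    have "mset (edge_labels T) = mset ?L" using T unfolding trees_def by blast
    then have "mset (word T) = mset ?L + mset ?L" by (simp only: mset_word)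
    moreover have "abab_free (word T)" using T by (simp add: mem_trees_iff abab_free_word)
    ultimately show ?thesis unfolding qs by blast
  qed
  moreover have "p \<in> word ` trees m" if p: "p \<in> quasi_stirling m" for p
  proof -
    have mp: "mset p = mset ?L + mset ?L" using p qs by blast
    have "count (mset p) x = 2" if "x \<in> set p" for x
    proof -
      have "x \<in> set ?L" using that mset_eq_setD[of p "?L @ ?L"] mp by simp
      then have "count (mset ?L) x = 1" by (metis distinct_upt distinct_count_atmost_1)
      then show ?thesis unfolding mp count_union by simp
    qed
    then obtain T where T: "word T = p" using word_surj p qs by blast
    then have "mset (edge_labels T) = mset ?L"
      using p by (auto simp: qs mset_word intro: mset_double_cancel)
    then show ?thesis using T by (auto simp: trees_def)
  qed
  ultimately show ?thesis unfolding bij_betw_def by blast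
qed

lemma finite_quasi_stirling: "finite (quasi_stirling m)"
proof (rule finite_subset)
  show "quasi_stirling m \<subseteq> {p. set p \<subseteq> {1..m} \<and> length p = 2 * m}"
  proof clarify
    fix p assume "p \<in> quasi_stirling m"
    then have "mset p = mset ([1..<m+1] @ [1..<m+1])" unfolding quasi_stirling_def by blast
    from mset_eq_setD[OF this] mset_eq_length[OF this]
    show "set p \<subseteq> {1..m} \<and> length p = 2 * m" by auto
  qed
  show "finite {p. set p \<subseteq> {1..m} \<and> length p = 2 * m}"
    by (rule finite_lists_length_eq) simp
qed

lemma finite_trees: "finite (trees m)"
  using bij_betw_finite[OF bij_betw_word] finite_quasi_stirling by blast

lemma Qbar_eq_sum_trees: "Qbar m = (\<Sum>T\<in>trees m. monom 1 (cdes_tree T))"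
proof -
  have "Qbar m = (\<Sum>T\<in>trees m. monom 1 (des (word T)))"
    unfolding Qbar_def by (rule sum.reindex_bij_betw[OF bij_betw_word, symmetric])
  also have "\<dots> = (\<Sum>T\<in>trees m. monom 1 (cdes_tree T))"
    by (intro sum.cong refl) (auto simp: des_word mem_trees_iff)
  finally show ?thesis .
qed

section \<open>Trees with a single root edge\<close>

definition cyc_pred :: "nat \<Rightarrow> nat \<Rightarrow> nat" where
  "cyc_pred n x = (if x = 1 then n else x - 1)"

lemma cyc_succ_pred:
  assumes "x \<in> {1..n}"
  shows "cyc_pred n (cyc_succ n x) = x" "cyc_succ n (cyc_pred n x) = x"
  using assms by (auto simp: cyc_succ_def cyc_pred_def)

lemma bij_betw_cyc_succ: "bij_betw (cyc_succ n) {1..n} {1..n}"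
  by (rule bij_betw_byWitness[where f' = "cyc_pred n"]) (auto simp: cyc_succ_def cyc_pred_def)

lemma bij_betw_cyc_pred: "bij_betw (cyc_pred n) {1..n} {1..n}"
  by (rule bij_betw_byWitness[where f' = "cyc_succ n"]) (auto simp: cyc_succ_def cyc_pred_def)

lemma relabel_mem_trees:
  assumes "bij_betw f {1..n} {1..n}" "T \<in> trees n"
  shows "relabel f T \<in> trees n"
  using assms by (auto simp: mem_trees_iff edge_labels_relabel distinct_map bij_betw_def)

definition planted_trees :: "nat \<Rightarrow> nat \<Rightarrow> ltree set" where
  "planted_trees n a = {S. Node [(a, S)] \<in> trees n}"

definition planted_poly :: "nat \<Rightarrow> nat \<Rightarrow> real poly" where
  "planted_poly n a = (\<Sum>S\<in>planted_trees n a. monom 1 (cdes_below a S))"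

lemma set_edge_labels_planted: "S \<in> planted_trees n a \<Longrightarrow> set (a # edge_labels S) = {1..n}"
  by (simp add: planted_trees_def mem_trees_iff)

lemma relabel_mem_planted_trees:
  assumes "bij_betw f {1..n} {1..n}" "S \<in> planted_trees n a"
  shows "relabel f S \<in> planted_trees n (f a)"
  using relabel_mem_trees[of f n "Node [(a, S)]"] assms by (simp add: planted_trees_def)

lemma finite_planted_trees: "finite (planted_trees n a)"
proof -
  have "inj (\<lambda>S. Node [(a, S)])" by (rule injI) simp
  from finite_vimageI[OF finite_trees this] show ?thesis
    by (simp add: planted_trees_def vimage_def)
qed

lemma R_eq_sum_planted_poly: "R n = (\<Sum>a\<in>{1..n}. planted_poly n a)"
proof -
  let ?root = "\<lambda>(a, S). Node [(a, S)]"
  let ?P = "SIGMA a:{1..n}. planted_trees n a"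
  have "trees1 n = ?root ` ?P"
  proof (intro equalityI subsetI)
    fix T assume "T \<in> trees1 n"
    then obtain a S where T: "T = Node [(a, S)]" "T \<in> trees n" by (auto simp: trees1_def)
    then have "a \<in> set (edge_labels T)" by simp
    then have "a \<in> {1..n}" using T(2) mem_trees_iff by blast
    with T show "T \<in> ?root ` ?P" by (force simp: planted_trees_def)
  qed (auto simp: trees1_def planted_trees_def)
  moreover have "inj_on ?root ?P" by (auto intro: inj_onI)
  ultimately have "R n = (\<Sum>(a, S)\<in>?P. monom 1 (cdes_tree (Node [(a, S)]) - 1))"
    unfolding R_def by (simp only: sum.reindex comp_def case_prod_unfold)
  also have "\<dots> = (\<Sum>(a, S)\<in>?P. monom 1 (cdes_below a S))"
    by (intro sum.cong refl) (clarsimp simp: des_eq_adj_des)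
  also have "\<dots> = (\<Sum>a\<in>{1..n}. planted_poly n a)"
    unfolding planted_poly_def by (rule sum.Sigma[symmetric]) (auto simp: finite_planted_trees)
  finally show ?thesis .
qed

lemma planted_poly_cyc_succ:
  assumes "a \<in> {1..n}"
  shows "planted_poly n (cyc_succ n a) = planted_poly n a"
  unfolding planted_poly_def
proof (rule sum.reindex_bij_witness[where i = "relabel (cyc_succ n)" and j = "relabel (cyc_pred n)"])
  fix S assume S: "S \<in> planted_trees n (cyc_succ n a)"
  have "set (edge_labels S) \<subseteq> {1..n}" using set_edge_labels_planted[OF S] by auto
  then show S_eq: "relabel (cyc_succ n) (relabel (cyc_pred n) S) = S"
    using cyc_succ_pred(2) by (intro relabel_inverse) blast
  show S': "relabel (cyc_pred n) S \<in> planted_trees n a"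
    using relabel_mem_planted_trees[OF bij_betw_cyc_pred S] assms by (simp add: cyc_succ_pred)
  have "cdes_below (cyc_succ n a) S
      = cdes_below (cyc_succ n a) (relabel (cyc_succ n) (relabel (cyc_pred n) S))"
    using S_eq by simp
  also have "\<dots> = cdes_below a (relabel (cyc_pred n) S)"
    using set_edge_labels_planted[OF S'] by (intro cdes_below_relabel_cyc_succ) simp
  finally show "monom 1 (cdes_below a (relabel (cyc_pred n) S))
      = monom 1 (cdes_below (cyc_succ n a) S)"
    by simp
next
  fix S assume S: "S \<in> planted_trees n a"
  have "set (edge_labels S) \<subseteq> {1..n}" using set_edge_labels_planted[OF S] by auto
  then show "relabel (cyc_pred n) (relabel (cyc_succ n) S) = S"
    using cyc_succ_pred(1) by (intro relabel_inverse) blast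
  show "relabel (cyc_succ n) S \<in> planted_trees n (cyc_succ n a)"
    by (rule relabel_mem_planted_trees[OF bij_betw_cyc_succ S])
qed

lemma planted_poly_eq_last:
  assumes "a \<in> {1..n}"
  shows "planted_poly n a = planted_poly n n"
  using assms
proof (induction "n - a" arbitrary: a)
  case (Suc k)
  then have "cyc_succ n a = Suc a" by (simp add: cyc_succ_def)
  then show ?case using Suc planted_poly_cyc_succ[of a n] by simp
qed simp

lemma planted_poly_last: "planted_poly (Suc m) (Suc m) = Qbar m"
proof -
  have trees: "planted_trees (Suc m) (Suc m) = trees m"
    by (auto simp: planted_trees_def mem_trees_iff atLeastAtMostSuc_conv insert_ident)
  have "cdes_below (Suc m) S = cdes_tree S" if "S \<in> trees m" for S
    using that by (intro cdes_below_extremal) (auto simp: mem_trees_iff)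
  then show ?thesis unfolding planted_poly_def trees Qbar_eq_sum_trees by simp
qed

lemma R_Suc: "R (Suc m) = smult (real (Suc m)) (Qbar m)"
proof -
  have "R (Suc m) = (\<Sum>a\<in>{1..Suc m}. Qbar m)"
    unfolding R_eq_sum_planted_poly
    by (intro sum.cong refl) (simp add: planted_poly_eq_last planted_poly_last)
  then show ?thesis by (simp add: of_nat_poly)
qed

theorem lemma2p4:
  shows "Abs_fps (\<lambda>n. if n = 0 then 0 else smult (1 / fact n) (R n))
       = fps_X * Abs_fps (\<lambda>n. smult (1 / fact n) (Qbar n))"
proof (rule fps_ext)
  fix n
  show "Abs_fps (\<lambda>n. if n = 0 then 0 else smult (1 / fact n) (R n)) $ n
      = (fps_X * Abs_fps (\<lambda>n. smult (1 / fact n) (Qbar n))) $ n"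
  proof (cases n)
    case (Suc m)
    have "1 / fact (Suc m) * real (Suc m) = 1 / fact m"
      by (simp add: divide_simps)
    then show ?thesis using Suc by (simp add: R_Suc)
  qed simp
qed

end
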